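(* Let $A=[a_{ij}]\in N_n$ and let $(i,j)$ with $a_{ij}\neq0$. If there exist $\lambda\in\mathbb F$ and $1\le p<q\le n$ such that the $(i,j)$ entry of $\mathcal O_{p,q}^\lambda(A)$ is $0$, then one of the following holds: (1) there is $p'$ with $i<p'<j$ and $a_{ip'}\neq0$; in this case $\mathcal O_{p',j}^{\mu}(A)$ with $\mu=a_{ij}/a_{ip'}$ has $(i,j)$ entry $0$; (2) there is $q'$ with $i<q'<j$ and $a_{q'j}\neq0$; in this case $\mathcal O_{i,q'}^{\mu}(A)$ with $\mu=-a_{ij}/a_{q'j}$ has $(i,j)$ entry $0$.
   Context: $\mathbb F$ is a field; $N_n$ is the set of strictly upper triangular $n\times n$ matrices over $\mathbb F$; $E_{pq}$ is the matrix unit. For $\lambda\in\mathbb F$ and $1\le p<q\le n$, the elementary $U_n$-similarity operation is $\mathcal O_{p,q}^\lambda(X)=(I_n+\lambda E_{pq})X(I_n+\lambda E_{pq})^{-1}$ for $X\in N_n$. (In graph language: the arc $(i,j)$ of the graph of $A$, whose arcs are the positions of nonzero entries, can be eliminated by such an operation only in the two cases listed.) *)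

theory Defs
  imports "Jordan_Normal_Form.Matrix"
begin

text \<open>Indices are 0-based (Jordan_Normal_Form convention): entry (i,j) with i,j < n.\<close>

definition mat_unit :: "nat \<Rightarrow> nat \<Rightarrow> nat \<Rightarrow> 'a::field mat" where
  "mat_unit n p q = mat n n (\<lambda>(i,j). if i = p \<and> j = q then 1 else 0)"

definition strict_upper :: "nat \<Rightarrow> 'a::field mat set" where
  "strict_upper n = {A. A \<in> carrier_mat n n \<and> (\<forall>i<n. \<forall>j<n. j \<le> i \<longrightarrow> A $$ (i,j) = 0)}"

definition mat_inv :: "nat \<Rightarrow> 'a::field mat \<Rightarrow> 'a mat" where
  "mat_inv n P = (THE B. B \<in> carrier_mat n n \<and> P * B = 1\<^sub>m n \<and> B * P = 1\<^sub>m n)"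

definition elem_op :: "nat \<Rightarrow> nat \<Rightarrow> nat \<Rightarrow> 'a::field \<Rightarrow> 'a mat \<Rightarrow> 'a mat" where
  "elem_op n p q c X =
     (1\<^sub>m n + c \<cdot>\<^sub>m mat_unit n p q) * X * mat_inv n (1\<^sub>m n + c \<cdot>\<^sub>m mat_unit n p q)"

end

theory Submission
  imports Defs
begin

text \<open>Conjugating by the transvection \<open>I + \<lambda>E\<^sub>p\<^sub>q\<close> adds \<open>\<lambda>\<close> times row \<open>q\<close> to row \<open>p\<close> and then
  subtracts \<open>\<lambda>\<close> times column \<open>p\<close> from column \<open>q\<close>. On a strictly upper triangular matrix the
  entry \<open>(i,j)\<close> therefore changes only if \<open>i = p\<close> (by \<open>\<lambda> a\<^sub>q\<^sub>j\<close>) or \<open>j = q\<close> (by \<open>-\<lambda> a\<^sub>i\<^sub>p\<close>), and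
  not both, since then the change would be \<open>\<lambda> (a\<^sub>q\<^sub>q - a\<^sub>p\<^sub>p) = 0\<close>. So a nonzero \<open>a\<^sub>i\<^sub>j\<close> can be
  cleared only through a nonzero \<open>a\<^sub>q\<^sub>j\<close> with \<open>i < q < j\<close> or a nonzero \<open>a\<^sub>i\<^sub>p\<close> with \<open>i < p < j\<close>,
  and the scalar is then forced.\<close>

definition transvection :: "nat \<Rightarrow> nat \<Rightarrow> nat \<Rightarrow> 'a::field \<Rightarrow> 'a mat" where
  "transvection n p q c = 1\<^sub>m n + c \<cdot>\<^sub>m mat_unit n p q"

lemma elem_op_transvection:
  "elem_op n p q c X = transvection n p q c * X * mat_inv n (transvection n p q c)"
  by (simp add: elem_op_def transvection_def)

lemma dim_row_transvection [simp]: "dim_row (transvection n p q c) = n"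
  and dim_col_transvection [simp]: "dim_col (transvection n p q c) = n"
  by (simp_all add: transvection_def mat_unit_def)

lemma transvection_carrier_mat: "transvection n p q c \<in> carrier_mat n n"
  by (simp add: carrier_matI)

lemma index_transvection:
  assumes "a < n" "b < n"
  shows "transvection n p q c $$ (a,b) = (if a = b then 1 else 0) + (if a = p \<and> b = q then c else 0)"
  using assms by (simp add: transvection_def mat_unit_def)

lemma index_transvection_mult:
  fixes X :: "'a::field mat"
  assumes X: "X \<in> carrier_mat n m" and "q < n" "i < n" "j < m"
  shows "(transvection n p q c * X) $$ (i,j) = X $$ (i,j) + (if i = p then c * X $$ (q,j) else 0)"
proof -
  have "(transvection n p q c * X) $$ (i,j) = (\<Sum>k\<in>{0..<n}. transvection n p q c $$ (i,k) * X $$ (k,j))"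
    using assms transvection_carrier_mat[of n p q c] by (simp add: scalar_prod_def)
  also have "\<dots> = (\<Sum>k\<in>{0..<n}. (if k = i then X $$ (k,j) else 0) + (if i = p \<and> k = q then c * X $$ (k,j) else 0))"
    by (rule sum.cong) (auto simp: index_transvection \<open>i < n\<close> distrib_right)
  also have "\<dots> = X $$ (i,j) + (if i = p then c * X $$ (q,j) else 0)"
    by (simp add: sum.distrib \<open>i < n\<close> \<open>q < n\<close>)
  finally show ?thesis .
qed

lemma index_mult_transvection:
  fixes X :: "'a::field mat"
  assumes X: "X \<in> carrier_mat m n" and "p < n" "i < m" "j < n"
  shows "(X * transvection n p q c) $$ (i,j) = X $$ (i,j) + (if j = q then c * X $$ (i,p) else 0)"
proof -
  have "(X * transvection n p q c) $$ (i,j) = (\<Sum>k\<in>{0..<n}. X $$ (i,k) * transvection n p q c $$ (k,j))"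
    using assms transvection_carrier_mat[of n p q c] by (simp add: scalar_prod_def)
  also have "\<dots> = (\<Sum>k\<in>{0..<n}. (if k = j then X $$ (i,k) else 0) + (if k = p \<and> j = q then c * X $$ (i,k) else 0))"
    by (rule sum.cong) (auto simp: index_transvection \<open>j < n\<close> distrib_left mult.commute)
  also have "\<dots> = X $$ (i,j) + (if j = q then c * X $$ (i,p) else 0)"
    by (simp add: sum.distrib \<open>j < n\<close> \<open>p < n\<close>)
  finally show ?thesis .
qed

lemma transvection_0: "transvection n p q 0 = (1\<^sub>m n :: 'a::field mat)"
  using transvection_carrier_mat[of n p q "0::'a"]
  by (intro eq_matI) (simp_all add: index_transvection)

lemma transvection_mult_transvection:
  assumes "p < n" "q < n" "p \<noteq> q"
  shows "transvection n p q c * transvection n p q d = transvection n p q (c + d)"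
proof (rule eq_matI)
  fix a b assume "a < dim_row (transvection n p q (c + d))" "b < dim_col (transvection n p q (c + d))"
  then show "(transvection n p q c * transvection n p q d) $$ (a,b) = transvection n p q (c + d) $$ (a,b)"
    using assms
    by (simp add: index_transvection_mult[OF transvection_carrier_mat] index_transvection
        del: index_mult_mat)
qed simp_all

lemma mat_inv_eqI:
  fixes P B :: "'a::field mat"
  assumes B: "B \<in> carrier_mat n n" and P: "P \<in> carrier_mat n n"
    and right: "P * B = 1\<^sub>m n" and left: "B * P = 1\<^sub>m n"
  shows "mat_inv n P = B"
  unfolding mat_inv_def
proof (rule the_equality)
  fix B' assume "B' \<in> carrier_mat n n \<and> P * B' = 1\<^sub>m n \<and> B' * P = 1\<^sub>m n"
  then have B': "B' \<in> carrier_mat n n" and right': "P * B' = 1\<^sub>m n"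
    by simp_all
  have "B' = (B * P) * B'"
    using B' by (simp add: left)
  also have "\<dots> = B * (P * B')"
    using B P B' by (rule assoc_mult_mat)
  also have "\<dots> = B"
    using B by (simp add: right')
  finally show "B' = B" .
qed (use assms in simp)

lemma mat_inv_transvection:
  assumes "p < n" "q < n" "p \<noteq> q"
  shows "mat_inv n (transvection n p q c) = transvection n p q (- c)"
  using assms
  by (intro mat_inv_eqI transvection_carrier_mat) (simp_all add: transvection_mult_transvection transvection_0)

lemma index_elem_op:
  fixes X :: "'a::field mat"
  assumes X: "X \<in> carrier_mat n n" and "p < n" "q < n" "p \<noteq> q" "i < n" "j < n"
  shows "elem_op n p q c X $$ (i,j) =
    X $$ (i,j) + (if i = p then c * X $$ (q,j) else 0)
      - (if j = q then c * (X $$ (i,p) + (if i = p then c * X $$ (q,p) else 0)) else 0)"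
proof -
  have TX: "transvection n p q c * X \<in> carrier_mat n n"
    using transvection_carrier_mat X by (rule mult_carrier_mat)
  have "elem_op n p q c X $$ (i,j) = (transvection n p q c * X * transvection n p q (- c)) $$ (i,j)"
    using assms by (simp add: elem_op_transvection mat_inv_transvection)
  also have "\<dots> = (transvection n p q c * X) $$ (i,j)
      + (if j = q then - c * (transvection n p q c * X) $$ (i,p) else 0)"
    using assms by (intro index_mult_transvection[OF TX])
  finally show ?thesis
    using assms by (simp add: index_transvection_mult[OF X] del: index_mult_mat)
qed

lemma strict_upper_carrier_mat: "A \<in> strict_upper n \<Longrightarrow> A \<in> carrier_mat n n"
  by (simp add: strict_upper_def)

lemma strict_upper_index_eq_0:
  "A \<in> strict_upper n \<Longrightarrow> i < n \<Longrightarrow> j \<le> i \<Longrightarrow> A $$ (i,j) = 0"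
  by (simp add: strict_upper_def)

lemma strict_upper_index_nonzero_less:
  "A \<in> strict_upper n \<Longrightarrow> i < n \<Longrightarrow> A $$ (i,j) \<noteq> 0 \<Longrightarrow> i < j"
  using strict_upper_index_eq_0 not_less by blast

lemma index_elem_op_strict_upper:
  assumes A: "A \<in> strict_upper n" and "p < q" "q < n" "i < n" "j < n"
  shows "elem_op n p q c A $$ (i,j) =
    A $$ (i,j) + (if i = p then c * A $$ (q,j) else 0) - (if j = q then c * A $$ (i,p) else 0)"
  using assms
  by (simp add: index_elem_op strict_upper_carrier_mat strict_upper_index_eq_0)

lemma elem_op_strict_upper_clears_entryD:
  assumes A: "A \<in> strict_upper n" and "p < q" "q < n" "i < n" "j < n"
    and "A $$ (i,j) \<noteq> 0" and "elem_op n p q c A $$ (i,j) = 0"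
  shows "i = p \<and> j \<noteq> q \<and> A $$ (q,j) \<noteq> 0 \<or> i \<noteq> p \<and> j = q \<and> A $$ (i,p) \<noteq> 0"
proof -
  have "A $$ (q,q) = 0" and "A $$ (p,p) = 0"
    using assms by (simp_all add: strict_upper_index_eq_0)
  with assms show ?thesis
    by (auto simp: index_elem_op_strict_upper split: if_splits)
qed

lemma elem_op_row_clears_entry:
  assumes A: "A \<in> strict_upper n" and "i < q" "q < n" "j < n" "j \<noteq> q" "A $$ (q,j) \<noteq> 0"
  shows "elem_op n i q (- A $$ (i,j) / A $$ (q,j)) A $$ (i,j) = 0"
  using assms by (simp add: index_elem_op_strict_upper)

lemma elem_op_column_clears_entry:
  assumes A: "A \<in> strict_upper n" and "p < j" "i < n" "j < n" "i \<noteq> p" "A $$ (i,p) \<noteq> 0"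
  shows "elem_op n p j (A $$ (i,j) / A $$ (i,p)) A $$ (i,j) = 0"
  using assms by (simp add: index_elem_op_strict_upper)

theorem lemma3p4:
  fixes A :: "'a::field mat" and n i j :: nat
  assumes "A \<in> strict_upper n" and "i < n" and "j < n" and "A $$ (i,j) \<noteq> 0"
    and "\<exists>c p q. p < q \<and> q < n \<and> elem_op n p q c A $$ (i,j) = 0"
  shows "(\<exists>p'. i < p' \<and> p' < j \<and> A $$ (i,p') \<noteq> 0 \<and>
            elem_op n p' j (A $$ (i,j) / A $$ (i,p')) A $$ (i,j) = 0)
       \<or> (\<exists>q'. i < q' \<and> q' < j \<and> A $$ (q',j) \<noteq> 0 \<and>
            elem_op n i q' (- A $$ (i,j) / A $$ (q',j)) A $$ (i,j) = 0)"
proof -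
  note A = \<open>A \<in> strict_upper n\<close>
  obtain c p q where pq: "p < q" "q < n" and cleared: "elem_op n p q c A $$ (i,j) = 0"
    using assms(5) by blast
  from elem_op_strict_upper_clears_entryD[OF A pq assms(2-4) cleared] show ?thesis
  proof (elim disjE conjE)
    assume "i = p" "j \<noteq> q" "A $$ (q,j) \<noteq> 0"
    moreover from this have "q < j"
      using strict_upper_index_nonzero_less[OF A pq(2)] by blast
    ultimately show ?thesis
      using pq assms(3) elem_op_row_clears_entry[OF A] by blast
  next
    assume "i \<noteq> p" "j = q" "A $$ (i,p) \<noteq> 0"
    moreover from this have "i < p"
      using strict_upper_index_nonzero_less[OF A assms(2)] by blast
    ultimately show ?thesis
      using pq assms(2,3) elem_op_column_clears_entry[OF A] by blast
  qed
qed

end
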